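(* There exists a universal $\varepsilon_1>0$ such that for every $0<\varepsilon\le\varepsilon_1$ the following holds. Let $\mathbf{u}=(u^1,\dots,u^m)$ be a viscosity solution to $\Delta\mathbf{u}=|\mathbf{u}|^{p-2}\mathbf{u}$ in $B_1$ such that $$|\mathbf{u}-f^1u_0(x_n)|\le\varepsilon\ \text{in } B_1\qquad\text{and}\qquad |\mathbf{u}|\equiv0\ \text{in } B_1\cap\{x_n<-\varepsilon\}.$$ Then $$|\mathbf{u}|\le u_0\!\left(x_n+\varepsilon^{\frac1{2\kappa}}\right)\ \text{in } B_1\qquad\text{and}\qquad u_0\!\left(x_n-\varepsilon^{\frac1{2\kappa}}\right)\le u^1\ \text{in } B_1\cap\left\{x_n\ge\varepsilon^{\frac1{2\kappa}}\right\}.$$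
   Context: Fix integers $n\ge 2$, $m\ge 1$ and $0<p<1$; universal means depending only on $n,m,p$. Set $\kappa:=\frac{2}{2-p}$, $c_p:=[\kappa(\kappa-1)]^{\frac{1}{p-2}}$, $u_0(t):=c_p(\max\{t,0\})^\kappa$. $f^1$ is the first standard basis vector of $\mathbb{R}^m$. For $\mathbf{u}\in C(\Omega;\mathbb{R}^m)$, $\Omega(\mathbf{u}):=\Omega\cap\{|\mathbf{u}|>0\}$, $\Gamma(\mathbf{u}):=\Omega\cap\partial\Omega(\mathbf{u})$. Viscosity solution: $\mathbf{u}\in C(\Omega;\mathbb{R}^m)$ is a viscosity solution of $\Delta\mathbf{u}=|\mathbf{u}|^{p-2}\mathbf{u}$ in $\Omega$ if (i) $\Delta u^i=|\mathbf{u}|^{p-2}u^i$ in $\Omega(\mathbf{u})$ for all $i$, and (ii) for every $x_0\in\Gamma(\mathbf{u})$ and every $f\in\mathbb{R}^m$, $\langle\mathbf{u},f\rangle$ cannot be touched from below at $x_0$ by a function $\varphi\in C^1$ with $\varphi(x_0)=0$, $|\nabla\varphi(x_0)|\ne0$, such that on $\{\varphi\ne0\}$, $\varphi\in C^2$ and $\Delta\varphi>\varphi^{p-1}\chi_{\{\varphi>0\}}$. *)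

theory Defs
  imports "HOL-Analysis.Analysis"
begin

definition kappa :: "real \<Rightarrow> real" where
  "kappa p = 2 / (2 - p)"

definition c_p :: "real \<Rightarrow> real" where
  "c_p p = (kappa p * (kappa p - 1)) powr (1 / (p - 2))"

definition u0 :: "real \<Rightarrow> real \<Rightarrow> real" where
  "u0 p t = c_p p * (max t 0) powr (kappa p)"

definition C1_grad_on :: "(real^'n) set \<Rightarrow> (real^'n \<Rightarrow> real) \<Rightarrow> (real^'n \<Rightarrow> real^'n) \<Rightarrow> bool" where
  "C1_grad_on S f Df \<longleftrightarrow>
     (\<forall>x\<in>S. (f has_derivative (\<lambda>h. Df x \<bullet> h)) (at x)) \<and> continuous_on S Df"

definition C2_on :: "(real^'n) set \<Rightarrow> (real^'n \<Rightarrow> real) \<Rightarrow> bool" where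
  "C2_on S f \<longleftrightarrow> (\<exists>Df D2f.
     (\<forall>x\<in>S. (f has_derivative (\<lambda>h. Df x \<bullet> h)) (at x)) \<and>
     (\<forall>x\<in>S. (Df has_derivative (\<lambda>h. D2f x *v h)) (at x)) \<and>
     continuous_on S (D2f :: real^'n \<Rightarrow> real^'n^'n))"

definition laplacian :: "(real^'n \<Rightarrow> real) \<Rightarrow> real^'n \<Rightarrow> real" where
  "laplacian f x = (\<Sum>i\<in>UNIV.
     deriv (\<lambda>s. deriv (\<lambda>t. f (x + t *\<^sub>R axis i 1)) s) 0)"

definition posset :: "(real^'n) set \<Rightarrow> (real^'n \<Rightarrow> real^'m) \<Rightarrow> (real^'n) set" where
  "posset \<Omega> u = \<Omega> \<inter> {x. norm (u x) > 0}"

definition free_bdry :: "(real^'n) set \<Rightarrow> (real^'n \<Rightarrow> real^'m) \<Rightarrow> (real^'n) set" where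
  "free_bdry \<Omega> u = \<Omega> \<inter> frontier (posset \<Omega> u)"

definition visc_sol :: "real \<Rightarrow> (real^'n) set \<Rightarrow> (real^'n \<Rightarrow> real^'m) \<Rightarrow> bool" where
  "visc_sol p \<Omega> u \<longleftrightarrow>
     continuous_on \<Omega> u \<and>
     (\<forall>i. C2_on (posset \<Omega> u) (\<lambda>x. u x $ i) \<and>
          (\<forall>x\<in>posset \<Omega> u.
             laplacian (\<lambda>y. u y $ i) x = norm (u x) powr (p - 2) * u x $ i)) \<and>
     (\<forall>x0\<in>free_bdry \<Omega> u. \<forall>f::real^'m.
        \<not> (\<exists>r>0. \<exists>\<phi> D\<phi>. ball x0 r \<subseteq> \<Omega> \<and>
              C1_grad_on (ball x0 r) \<phi> D\<phi> \<and> \<phi> x0 = 0 \<and> D\<phi> x0 \<noteq> 0 \<and>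
              C2_on (ball x0 r \<inter> {x. \<phi> x \<noteq> 0}) \<phi> \<and>
              (\<forall>x\<in>ball x0 r \<inter> {x. \<phi> x \<noteq> 0}.
                 laplacian \<phi> x > (if \<phi> x > 0 then \<phi> x powr (p - 1) else 0)) \<and>
              (\<forall>x\<in>ball x0 r. \<phi> x \<le> u x \<bullet> f)))"

end

theory Submission
  imports Defs
begin

(* Put \<delta> = \<epsilon>^(1/(2\<kappa>)), so that u0(\<delta>) = c_p \<surd>\<epsilon>. For small \<epsilon> this gives
   \<epsilon> \<le> \<delta>/2 and \<epsilon> \<le> u0(\<delta>/2), and superadditivity of the convex power u0 then yields
   u0(t) + \<epsilon> \<le> u0(t + \<delta>) for all t \<ge> -\<epsilon>. Taking t = x_n gives the upper bound (below
   x_n = -\<epsilon> the solution vanishes), taking t = x_n - \<delta> the lower bound. *)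

lemma powr_superadd:
  fixes x y k :: real
  assumes "1 \<le> k" "0 \<le> x" "0 \<le> y"
  shows "x powr k + y powr k \<le> (x + y) powr k"
proof -
  have "x powr k + y powr k = x * x powr (k - 1) + y * y powr (k - 1)"
    using assms by (simp add: powr_mult_base)
  also have "\<dots> \<le> x * (x + y) powr (k - 1) + y * (x + y) powr (k - 1)"
    using assms by (intro add_mono mult_left_mono powr_mono2) auto
  also have "\<dots> = (x + y) powr k"
    using assms by (simp add: powr_mult_base flip: distrib_right)
  finally show ?thesis .
qed

lemma kappa_ge_1: "0 \<le> p \<Longrightarrow> p < 2 \<Longrightarrow> 1 \<le> kappa p"
  by (simp add: kappa_def field_simps)

lemma c_p_pos:
  assumes "0 < p" "p < 2"
  shows "0 < c_p p"
proof -
  have "1 < kappa p"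
    using assms by (simp add: kappa_def field_simps)
  then show ?thesis
    by (simp add: c_p_def)
qed

lemma c_p_nonneg: "0 \<le> c_p p"
  by (simp add: c_p_def)

lemma u0_nonneg: "0 \<le> u0 p t"
  by (simp add: u0_def c_p_nonneg)

lemma u0_mono:
  assumes "0 \<le> p" "p < 2" "s \<le> t"
  shows "u0 p s \<le> u0 p t"
  using assms kappa_ge_1[of p] c_p_nonneg[of p]
  by (auto simp: u0_def intro!: mult_left_mono powr_mono2)

lemma u0_superadd:
  assumes "0 \<le> p" "p < 2" "0 \<le> s" "0 \<le> t"
  shows "u0 p s + u0 p t \<le> u0 p (s + t)"
  using assms powr_superadd[of "kappa p" s t] kappa_ge_1[of p] c_p_nonneg[of p]
  by (simp add: u0_def mult_left_mono flip: distrib_left)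

lemma u0_shift_eq_c_p_sqrt:
  assumes "0 \<le> p" "p < 2" "0 \<le> \<epsilon>"
  shows "u0 p (\<epsilon> powr (1 / (2 * kappa p))) = c_p p * sqrt \<epsilon>"
proof -
  have "(\<epsilon> powr (1 / (2 * kappa p))) powr kappa p = \<epsilon> powr (1 / 2)"
    using kappa_ge_1[OF assms(1,2)] by (simp add: powr_powr)
  then show ?thesis
    using assms by (simp add: u0_def powr_half_sqrt)
qed

definition shift_threshold :: "real \<Rightarrow> real" where
  "shift_threshold p = min (1 / 4) ((c_p p / 2 powr kappa p)\<^sup>2)"

lemma shift_threshold_pos: "0 < p \<Longrightarrow> p < 2 \<Longrightarrow> 0 < shift_threshold p"
  using c_p_pos[of p] by (simp add: shift_threshold_def)

lemma shift_threshold_bounds: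
  fixes p \<epsilon> :: real
  defines "\<delta> \<equiv> \<epsilon> powr (1 / (2 * kappa p))"
  assumes p: "0 \<le> p" "p < 2" and \<epsilon>: "0 < \<epsilon>" "\<epsilon> \<le> shift_threshold p"
  shows "\<epsilon> \<le> \<delta> / 2" and "\<epsilon> \<le> u0 p (\<delta> / 2)"
proof -
  have k: "1 \<le> kappa p"
    using kappa_ge_1[OF p] .
  have "sqrt \<epsilon> \<le> sqrt (1 / 4)" and "sqrt \<epsilon> \<le> sqrt ((c_p p / 2 powr kappa p)\<^sup>2)"
    using \<epsilon> unfolding shift_threshold_def by (intro real_sqrt_le_mono; simp)+
  then have small: "sqrt \<epsilon> \<le> 1 / 2" and below_c: "sqrt \<epsilon> \<le> c_p p / 2 powr kappa p"
    using c_p_nonneg[of p] by (simp_all add: real_sqrt_divide)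
  have "sqrt \<epsilon> = \<epsilon> powr (1 / 2)"
    using \<epsilon> by (simp add: powr_half_sqrt)
  also have "\<dots> \<le> \<delta>"
    unfolding \<delta>_def using \<epsilon> k
    by (intro powr_mono') (auto simp: field_simps shift_threshold_def)
  finally have "sqrt \<epsilon> \<le> \<delta>" .
  moreover have "2 * \<epsilon> \<le> sqrt \<epsilon>"
    using \<epsilon> mult_right_mono[OF small, of "sqrt \<epsilon>"] by simp
  ultimately show "\<epsilon> \<le> \<delta> / 2"
    by simp
  have "\<epsilon> = sqrt \<epsilon> * sqrt \<epsilon>"
    using \<epsilon> by simp
  also have "\<dots> \<le> c_p p / 2 powr kappa p * sqrt \<epsilon>"
    using below_c \<epsilon> by (intro mult_right_mono) auto
  also have "\<dots> = c_p p * sqrt \<epsilon> / 2 powr kappa p"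
    by simp
  also have "\<dots> = u0 p \<delta> / 2 powr kappa p"
    unfolding \<delta>_def using p \<epsilon> by (simp add: u0_shift_eq_c_p_sqrt)
  also have "\<dots> = u0 p (\<delta> / 2)"
    unfolding \<delta>_def by (simp add: u0_def powr_divide)
  finally show "\<epsilon> \<le> u0 p (\<delta> / 2)" .
qed

lemma u0_add_le_shift:
  fixes p \<epsilon> :: real
  defines "\<delta> \<equiv> \<epsilon> powr (1 / (2 * kappa p))"
  assumes p: "0 \<le> p" "p < 2" and \<epsilon>: "0 < \<epsilon>" "\<epsilon> \<le> shift_threshold p" and t: "- \<epsilon> \<le> t"
  shows "u0 p t + \<epsilon> \<le> u0 p (t + \<delta>)"
proof -
  note bounds = shift_threshold_bounds[OF p \<epsilon>, folded \<delta>_def]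
  show ?thesis
  proof (cases "0 \<le> t")
    case True
    have "u0 p t + \<epsilon> \<le> u0 p t + u0 p (\<delta> / 2)"
      using bounds by simp
    also have "\<dots> \<le> u0 p (t + \<delta> / 2)"
      using True bounds \<epsilon> p by (intro u0_superadd) auto
    also have "\<dots> \<le> u0 p (t + \<delta>)"
      using bounds \<epsilon> p by (intro u0_mono) auto
    finally show ?thesis .
  next
    case False
    then have "u0 p t = 0"
      by (simp add: u0_def)
    moreover have "u0 p (\<delta> / 2) \<le> u0 p (t + \<delta>)"
      using bounds t p by (intro u0_mono) auto
    ultimately show ?thesis
      using bounds by simp
  qed
qed

lemma near_scaled_axis_bounds:
  fixes v :: "real^'m"
  assumes "norm (v - a *\<^sub>R axis j 1) \<le> e" "0 \<le> a"
  shows "norm v \<le> a + e" and "a - e \<le> v $ j"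
proof -
  show "norm v \<le> a + e"
    using assms norm_triangle_sub[of v "a *\<^sub>R axis j 1"] by simp
  have "\<bar>(v - a *\<^sub>R axis j 1) $ j\<bar> \<le> e"
    using assms(1) component_le_norm_cart order_trans by blast
  then show "a - e \<le> v $ j"
    by (simp add: axis_def)
qed

lemma u0_shift_bounds_of_near_profile:
  fixes v :: "real^'m" and p \<epsilon> t :: real
  defines "\<delta> \<equiv> \<epsilon> powr (1 / (2 * kappa p))"
  assumes p: "0 \<le> p" "p < 2" and \<epsilon>: "0 < \<epsilon>" "\<epsilon> \<le> shift_threshold p"
    and near: "norm (v - u0 p t *\<^sub>R axis j 1) \<le> \<epsilon>"
    and vanish: "t < - \<epsilon> \<Longrightarrow> norm v = 0"
  shows "norm v \<le> u0 p (t + \<delta>)"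
    and "\<delta> \<le> t \<Longrightarrow> u0 p (t - \<delta>) \<le> v $ j"
proof -
  note closeness = near_scaled_axis_bounds[OF near u0_nonneg]
  show "norm v \<le> u0 p (t + \<delta>)"
  proof (cases "t < - \<epsilon>")
    case True
    then show ?thesis
      using vanish u0_nonneg by simp
  next
    case False
    then show ?thesis
      using closeness(1) u0_add_le_shift[OF p \<epsilon>, of t] unfolding \<delta>_def by simp
  qed
  assume "\<delta> \<le> t"
  then have "u0 p (t - \<delta>) + \<epsilon> \<le> u0 p t"
    using u0_add_le_shift[OF p \<epsilon>, of "t - \<delta>"] \<epsilon> unfolding \<delta>_def by simp
  then show "u0 p (t - \<delta>) \<le> v $ j"
    using closeness(2) by simp
qed

theorem lemma4p2:
  fixes p :: real
  assumes "CARD('n) \<ge> 2" and "0 < p" and "p < 1"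
  shows "\<exists>\<epsilon>1>0. \<forall>\<epsilon>. 0 < \<epsilon> \<and> \<epsilon> \<le> \<epsilon>1 \<longrightarrow>
    (\<forall>(k::'n) (j::'m) (u :: real^'n \<Rightarrow> real^'m).
       visc_sol p (ball 0 1) u \<and>
       (\<forall>x\<in>ball 0 1. norm (u x - u0 p (x $ k) *\<^sub>R axis j 1) \<le> \<epsilon>) \<and>
       (\<forall>x\<in>ball 0 1. x $ k < - \<epsilon> \<longrightarrow> norm (u x) = 0)
       \<longrightarrow>
       (\<forall>x\<in>ball 0 1. norm (u x) \<le> u0 p (x $ k + \<epsilon> powr (1 / (2 * kappa p)))) \<and>
       (\<forall>x\<in>ball 0 1. x $ k \<ge> \<epsilon> powr (1 / (2 * kappa p)) \<longrightarrow>
          u0 p (x $ k - \<epsilon> powr (1 / (2 * kappa p))) \<le> u x $ j))"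
proof (intro exI[of _ "shift_threshold p"] conjI allI impI)
  show "0 < shift_threshold p"
    using assms by (simp add: shift_threshold_pos)
next
  fix \<epsilon> :: real and k :: 'n and j :: 'm and u :: "real^'n \<Rightarrow> real^'m"
  assume \<epsilon>: "0 < \<epsilon> \<and> \<epsilon> \<le> shift_threshold p"
    and u: "visc_sol p (ball 0 1) u \<and>
       (\<forall>x\<in>ball 0 1. norm (u x - u0 p (x $ k) *\<^sub>R axis j 1) \<le> \<epsilon>) \<and>
       (\<forall>x\<in>ball 0 1. x $ k < - \<epsilon> \<longrightarrow> norm (u x) = 0)"
  have p: "0 \<le> p" "p < 2"
    using assms by auto
  have "norm (u x) \<le> u0 p (x $ k + \<epsilon> powr (1 / (2 * kappa p)))"
    and "\<epsilon> powr (1 / (2 * kappa p)) \<le> x $ k \<Longrightarrow>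
      u0 p (x $ k - \<epsilon> powr (1 / (2 * kappa p))) \<le> u x $ j"
    if "x \<in> ball 0 1" for x
    using u0_shift_bounds_of_near_profile[OF p, of \<epsilon> "u x" "x $ k" j] \<epsilon> u that by auto
  then show "\<forall>x\<in>ball 0 1. norm (u x) \<le> u0 p (x $ k + \<epsilon> powr (1 / (2 * kappa p)))"
    and "\<forall>x\<in>ball 0 1. x $ k \<ge> \<epsilon> powr (1 / (2 * kappa p)) \<longrightarrow>
          u0 p (x $ k - \<epsilon> powr (1 / (2 * kappa p))) \<le> u x $ j"
    by blast+
qed

end
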